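(* Let $0\le r\le n$ and let $T=P(x,u_0,\dots,u_r)$, with $P$ a real polynomial, satisfy $T(\mathcal P_n)\subset\mathcal P_n$. If $r<n/2$, then $P$ has total degree at most $1$ in the variables $u_0,\dots,u_r$ (i.e. $T$ is linear up to an additive term $p(x)$). If $r<2n/3$, then $P$ has total degree at most $2$ in $u_0,\dots,u_r$.
   Context: Operators of order $\le r$ are identified with polynomials $P(x,u_0,\dots,u_r)$ acting on smooth $f$ by $P[f](x)=P(x,f(x),f'(x),\dots,f^{(r)}(x))$. $\mathcal P_s$ denotes the space of real polynomials in $x$ of degree at most $s$. *)

theory Defs
  imports Complex_Main "HOL-Computational_Algebra.Polynomial"
begin

text \<open>A real polynomial P(x,u_0,...,u_r) is represented by its coefficient function:
  c k a is the coefficient of the monomial x^k * u_0^(a 0) * ... * u_r^(a r).\<close>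

definition poly_coeffs :: "nat \<Rightarrow> (nat \<Rightarrow> (nat \<Rightarrow> nat) \<Rightarrow> real) \<Rightarrow> bool" where
  "poly_coeffs r c \<longleftrightarrow> finite {(k, a). c k a \<noteq> 0} \<and>
     (\<forall>k a. c k a \<noteq> 0 \<longrightarrow> (\<forall>j>r. a j = 0))"

definition peval :: "nat \<Rightarrow> (nat \<Rightarrow> (nat \<Rightarrow> nat) \<Rightarrow> real) \<Rightarrow> real \<Rightarrow> (nat \<Rightarrow> real) \<Rightarrow> real" where
  "peval r c x u = (\<Sum>(k, a)\<in>{(k, a). c k a \<noteq> 0}. c k a * x ^ k * (\<Prod>j\<le>r. u j ^ a j))"

definition op_apply :: "nat \<Rightarrow> (nat \<Rightarrow> (nat \<Rightarrow> nat) \<Rightarrow> real) \<Rightarrow> real poly \<Rightarrow> real \<Rightarrow> real" where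
  "op_apply r c f x = peval r c x (\<lambda>j. poly ((pderiv ^^ j) f) x)"

definition udeg_le :: "nat \<Rightarrow> (nat \<Rightarrow> (nat \<Rightarrow> nat) \<Rightarrow> real) \<Rightarrow> nat \<Rightarrow> bool" where
  "udeg_le r c d \<longleftrightarrow> (\<forall>k a. c k a \<noteq> 0 \<longrightarrow> (\<Sum>j\<le>r. a j) \<le> d)"

definition preserves_Pn :: "nat \<Rightarrow> (nat \<Rightarrow> (nat \<Rightarrow> nat) \<Rightarrow> real) \<Rightarrow> nat \<Rightarrow> bool" where
  "preserves_Pn r c n \<longleftrightarrow> (\<forall>f::real poly. degree f \<le> n \<longrightarrow>
      (\<exists>g::real poly. degree g \<le> n \<and> (\<forall>x. op_apply r c f x = poly g x)))"

end

theory Submission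
  imports Defs
begin

(* Split P into its parts P_d homogeneous of degree d in u. Replacing f by s f shows that
   each T_d = P_d[.] maps P_n into P_n on its own. Every f in P_n is a combination of the
   powers (x - t)^n, whose derivatives of order <= r are all divisible by (x - t)^(n - r).
   Expanding T_d(g + s (x - t)^n) in s therefore produces operators of lower degree that
   carry an extra factor (x - t)^(b (n - r)); inducting on the number of powers, any such
   operator of degree D with a factor W that maps P_n into P_n vanishes on P_n once
   deg W + D (n - r) > n, the base case being that a nonzero multiple of W has degree
   >= deg W. So T_d = 0 on P_n whenever d (n - r) > n. As every r-jet at a point is the
   jet of a polynomial of degree r <= n, P_d itself is then zero. Taking d = 2 for
   r < n/2 and d = 3 for r < 2n/3 gives the two claims. *)

lemma higher_pderiv_linear_power:
  fixes a :: "'a::idom"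
  shows "(pderiv ^^ i) ([:-a, 1:] ^ m) = smult (\<Prod>l<i. of_nat (m - l)) ([:-a, 1:] ^ (m - i))"
proof (induction i)
  case 0
  then show ?case by simp
next
  case (Suc i)
  note IH = Suc.IH
  show ?case
  proof (cases "m - i")
    case 0
    then show ?thesis using IH by (simp add: pderiv_smult)
  next
    case (Suc k)
    have "pderiv [:-a, 1:] = 1" and "m - Suc i = k"
      using Suc by (simp_all add: pderiv_pCons)
    then have "pderiv ([:-a, 1:] ^ (m - i)) = smult (of_nat (m - i)) ([:-a, 1:] ^ (m - Suc i))"
      unfolding Suc pderiv_power_Suc using Suc by simp
    with IH show ?thesis by (simp add: pderiv_smult)
  qed
qed

lemma linear_power_dvd_higher_pderiv:
  fixes a :: "'a::idom"
  assumes "j \<le> r"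
  shows "[:-a, 1:] ^ (n - r) dvd (pderiv ^^ j) ([:-a, 1:] ^ n)"
proof -
  have "[:-a, 1:] ^ (n - r) dvd [:-a, 1:] ^ (n - j)"
    using assms by (intro le_imp_power_dvd) simp
  then show ?thesis
    unfolding higher_pderiv_linear_power by (rule dvd_smult)
qed

lemma sum_powers_eq_0_imp_eq_0:
  fixes b :: "nat \<Rightarrow> 'a::{idom,ring_char_0}"
  assumes "finite D" and "\<And>s. (\<Sum>d\<in>D. s ^ d * b d) = 0" and "d \<in> D"
  shows "b d = 0"
proof -
  let ?q = "\<Sum>d\<in>D. monom (b d) d"
  have "poly ?q s = 0" for s
    using assms(2) by (simp add: poly_sum poly_monom mult.commute)
  then have "?q = 0"
    using poly_all_0_iff_0 by blast
  moreover have "coeff ?q d = b d"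
    using assms(1,3) by (simp add: coeff_sum)
  ultimately show ?thesis by simp
qed

lemma degree_le_of_sum_powers:
  fixes X :: "nat \<Rightarrow> 'a::{idom,ring_char_0} poly"
  assumes "finite D" and "\<And>s. degree (\<Sum>d\<in>D. smult (s ^ d) (X d)) \<le> n" and "d \<in> D"
  shows "degree (X d) \<le> n"
proof (rule degree_le, intro allI impI)
  fix i assume "n < i"
  have "(\<Sum>d\<in>D. s ^ d * coeff (X d) i) = 0" for s
  proof -
    have "coeff (\<Sum>d\<in>D. smult (s ^ d) (X d)) i = 0"
      using assms(2) \<open>n < i\<close> by (intro coeff_eq_0) (meson le_less_trans)
    then show ?thesis by (simp add: coeff_sum)
  qed
  then show "coeff (X d) i = 0"
    using sum_powers_eq_0_imp_eq_0[of D "\<lambda>d. coeff (X d) i" d] assms(1,3) by blast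
qed

(* A g is a sum of terms W * p * g^(j_1) * ... * g^(j_D) with all j_i <= r. *)
inductive homog_diff_op :: "nat \<Rightarrow> nat \<Rightarrow> 'a::idom poly \<Rightarrow> ('a poly \<Rightarrow> 'a poly) \<Rightarrow> bool"
  for r where
  zero: "homog_diff_op r D W (\<lambda>g. 0)"
| const: "homog_diff_op r 0 W (\<lambda>g. W * p)"
| mult_pderiv: "homog_diff_op r D W A \<Longrightarrow> j \<le> r \<Longrightarrow>
    homog_diff_op r (Suc D) W (\<lambda>g. A g * (pderiv ^^ j) g)"
| add: "homog_diff_op r D W A \<Longrightarrow> homog_diff_op r D W B \<Longrightarrow>
    homog_diff_op r D W (\<lambda>g. A g + B g)"

lemma homog_diff_op_cong:
  "homog_diff_op r D W A \<Longrightarrow> (\<And>g. A g = B g) \<Longrightarrow> homog_diff_op r D W B"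
  by (metis ext)

lemma homog_diff_op_dvd: "homog_diff_op r D W A \<Longrightarrow> W dvd A g"
  by (induction rule: homog_diff_op.induct) auto

lemma homog_diff_op_smult:
  "homog_diff_op r D W A \<Longrightarrow> A (smult s g) = smult (s ^ D) (A g)"
  by (induction rule: homog_diff_op.induct)
    (auto simp: higher_pderiv_smult algebra_simps smult_add_right)

lemma homog_diff_op_at_0:
  assumes "homog_diff_op r D W A" and "D = 0 \<Longrightarrow> degree (A 0) < degree W"
  shows "A 0 = 0"
proof (cases D)
  case 0
  then show ?thesis
    using homog_diff_op_dvd[OF assms(1)] assms(2) by (metis dvd_imp_degree_le leD)
next
  case Suc
  then show ?thesis
    using homog_diff_op_smult[OF assms(1), of 0 0] by simp
qed

lemma homog_diff_op_mult_weight: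
  "homog_diff_op r D W A \<Longrightarrow> homog_diff_op r D (W * P) (\<lambda>g. A g * (P * q))"
proof (induction rule: homog_diff_op.induct)
  case (zero D W)
  then show ?case using homog_diff_op.zero by simp
next
  case (const W p)
  then show ?case
    using homog_diff_op.const[of r "W * P" "p * q"] by (simp add: algebra_simps)
next
  case (mult_pderiv D W A j)
  then show ?case
    by (intro homog_diff_op_cong[OF homog_diff_op.mult_pderiv[OF mult_pderiv.IH]])
      (auto simp: algebra_simps)
next
  case (add D W A B)
  then show ?case
    by (intro homog_diff_op_cong[OF homog_diff_op.add[OF add.IH]]) (auto simp: algebra_simps)
qed

lemma homog_diff_op_power:
  "homog_diff_op r D W A \<Longrightarrow> j \<le> r \<Longrightarrow>
    homog_diff_op r (D + e) W (\<lambda>g. A g * ((pderiv ^^ j) g) ^ e)"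
proof (induction e)
  case 0
  then show ?case by simp
next
  case (Suc e)
  then have "homog_diff_op r (Suc (D + e)) W (\<lambda>g. (A g * ((pderiv ^^ j) g) ^ e) * (pderiv ^^ j) g)"
    by (intro homog_diff_op.mult_pderiv) auto
  then show ?case
    by (auto intro: homog_diff_op_cong simp: mult_ac)
qed

lemma homog_diff_op_prod:
  "homog_diff_op r D W A \<Longrightarrow> m \<le> r \<Longrightarrow>
    homog_diff_op r (D + (\<Sum>j\<le>m. e j)) W (\<lambda>g. A g * (\<Prod>j\<le>m. ((pderiv ^^ j) g) ^ e j))"
proof (induction m)
  case 0
  then show ?case using homog_diff_op_power[OF 0(1), of 0 "e 0"] by simp
next
  case (Suc m)
  then have "homog_diff_op r (D + (\<Sum>j\<le>m. e j) + e (Suc m)) W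
     (\<lambda>g. A g * (\<Prod>j\<le>m. ((pderiv ^^ j) g) ^ e j) * ((pderiv ^^ Suc m) g) ^ e (Suc m))"
    by (intro homog_diff_op_power) auto
  then show ?case
    by (auto intro: homog_diff_op_cong simp: add.assoc mult_ac)
qed

lemma homog_diff_op_sum:
  "finite I \<Longrightarrow> (\<And>i. i \<in> I \<Longrightarrow> homog_diff_op r D W (F i)) \<Longrightarrow>
    homog_diff_op r D W (\<lambda>g. \<Sum>i\<in>I. F i g)"
proof (induction I rule: finite_induct)
  case empty
  then show ?case by (simp add: homog_diff_op.zero)
next
  case (insert i I)
  then have "homog_diff_op r D W (\<lambda>g. F i g + (\<Sum>i\<in>I. F i g))"
    by (intro homog_diff_op.add) auto
  then show ?case using insert by simp
qed

lemma sum_powers_mult_linear: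
  fixes X :: "nat \<Rightarrow> 'a::comm_ring_1 poly"
  shows "(\<Sum>b\<le>D. smult (s ^ b) (X b)) * (u + smult s v) =
    (\<Sum>b\<le>Suc D. smult (s ^ b)
      ((if b \<le> D then X b * u else 0) + (case b of 0 \<Rightarrow> 0 | Suc b' \<Rightarrow> X b' * v)))"
proof -
  have "(\<Sum>b\<le>D. smult (s ^ b) (X b)) * (u + smult s v) =
      (\<Sum>b\<le>D. smult (s ^ b) (X b * u) + smult (s ^ Suc b) (X b * v))"
    unfolding sum_distrib_right by (simp add: distrib_left smult_add_right mult_ac)
  also have "\<dots> = (\<Sum>b\<le>D. smult (s ^ b) (X b * u)) + (\<Sum>b\<le>D. smult (s ^ Suc b) (X b * v))"
    by (rule sum.distrib)
  also have "(\<Sum>b\<le>D. smult (s ^ b) (X b * u)) =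
      (\<Sum>b\<le>Suc D. smult (s ^ b) (if b \<le> D then X b * u else 0))"
    by simp
  also have "(\<Sum>b\<le>D. smult (s ^ Suc b) (X b * v)) =
      (\<Sum>b\<le>Suc D. smult (s ^ b) (case b of 0 \<Rightarrow> 0 | Suc b' \<Rightarrow> X b' * v))"
    by (subst sum.atMost_Suc_shift) simp
  finally show ?thesis
    by (simp add: smult_add_right sum.distrib)
qed

(* The coefficient of s^b in A (g + s h) * (g + s h)^(j), given that
   A (g + s h) = sum_b s^b X_b g. *)
lemma homog_diff_op_expansion_step:
  assumes "\<forall>b\<le>D. homog_diff_op r (D - b) (W * P ^ b) (X b)" and "j \<le> r"
    and "(pderiv ^^ j) h = P * q" and "b \<le> Suc D"
  shows "homog_diff_op r (Suc D - b) (W * P ^ b)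
    (\<lambda>g. (if b \<le> D then X b g * (pderiv ^^ j) g else 0) +
      (case b of 0 \<Rightarrow> 0 | Suc b' \<Rightarrow> X b' g * (pderiv ^^ j) h))"
proof (rule homog_diff_op.add)
  show "homog_diff_op r (Suc D - b) (W * P ^ b)
      (\<lambda>g. if b \<le> D then X b g * (pderiv ^^ j) g else 0)"
  proof (cases "b \<le> D")
    case True
    then have "homog_diff_op r (Suc (D - b)) (W * P ^ b) (\<lambda>g. X b g * (pderiv ^^ j) g)"
      using assms(1,2) by (intro homog_diff_op.mult_pderiv) auto
    then show ?thesis
      using True by (simp add: Suc_diff_le)
  qed (simp add: homog_diff_op.zero)
  show "homog_diff_op r (Suc D - b) (W * P ^ b)
      (\<lambda>g. case b of 0 \<Rightarrow> 0 | Suc b' \<Rightarrow> X b' g * (pderiv ^^ j) h)"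
  proof (cases b)
    case (Suc b')
    then have "homog_diff_op r (D - b') (W * P ^ b' * P) (\<lambda>g. X b' g * (P * q))"
      using assms(1,4) by (intro homog_diff_op_mult_weight) auto
    then show ?thesis
      using Suc assms(3) by (simp add: mult_ac)
  qed (simp add: homog_diff_op.zero)
qed

lemma homog_diff_op_expand:
  assumes "homog_diff_op r D W A" and "\<And>j. j \<le> r \<Longrightarrow> P dvd (pderiv ^^ j) h"
  shows "\<exists>X. (\<forall>b\<le>D. homog_diff_op r (D - b) (W * P ^ b) (X b)) \<and>
    (\<forall>g s. A (g + smult s h) = (\<Sum>b\<le>D. smult (s ^ b) (X b g)))"
  using assms(1)
proof induction
  case (zero D W)
  show ?case
    by (rule exI[of _ "\<lambda>b g. 0"]) (auto intro: homog_diff_op.zero)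
next
  case (const W p)
  show ?case
    by (rule exI[of _ "\<lambda>b g. W * p"]) (auto intro: homog_diff_op.const)
next
  case (mult_pderiv D W A j)
  from mult_pderiv.IH obtain X
    where X_op: "\<forall>b\<le>D. homog_diff_op r (D - b) (W * P ^ b) (X b)"
      and X_expand: "\<forall>g s. A (g + smult s h) = (\<Sum>b\<le>D. smult (s ^ b) (X b g))"
    by blast
  obtain q where q: "(pderiv ^^ j) h = P * q"
    using assms(2)[OF mult_pderiv.hyps(2)] by blast
  define Y where "Y b g = (if b \<le> D then X b g * (pderiv ^^ j) g else 0) +
    (case b of 0 \<Rightarrow> 0 | Suc b' \<Rightarrow> X b' g * (pderiv ^^ j) h)" for b g
  have "homog_diff_op r (Suc D - b) (W * P ^ b) (Y b)" if "b \<le> Suc D" for b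
    unfolding Y_def using X_op mult_pderiv.hyps(2) q that by (rule homog_diff_op_expansion_step)
  moreover have "A (g + smult s h) * (pderiv ^^ j) (g + smult s h) =
      (\<Sum>b\<le>Suc D. smult (s ^ b) (Y b g))" for g s
    using X_expand sum_powers_mult_linear[of s "\<lambda>b. X b g" D "(pderiv ^^ j) g" "(pderiv ^^ j) h"]
    by (simp add: Y_def higher_pderiv_add higher_pderiv_smult)
  ultimately show ?case
    by auto
next
  case (add D W A B)
  from add.IH(1) obtain X
    where "\<forall>b\<le>D. homog_diff_op r (D - b) (W * P ^ b) (X b)"
      and "\<forall>g s. A (g + smult s h) = (\<Sum>b\<le>D. smult (s ^ b) (X b g))"
    by blast
  moreover from add.IH(2) obtain Z
    where "\<forall>b\<le>D. homog_diff_op r (D - b) (W * P ^ b) (Z b)"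
      and "\<forall>g s. B (g + smult s h) = (\<Sum>b\<le>D. smult (s ^ b) (Z b g))"
    by blast
  ultimately show ?case
    by (intro exI[of _ "\<lambda>b g. X b g + Z b g"])
      (auto intro: homog_diff_op.add simp: smult_add_right sum.distrib)
qed

inductive_set shifted_power_span :: "nat \<Rightarrow> 'a::comm_ring_1 poly set" for n where
  zero: "0 \<in> shifted_power_span n"
| add_power: "g \<in> shifted_power_span n \<Longrightarrow> g + smult s ([:-t, 1:] ^ n) \<in> shifted_power_span n"

lemma homog_diff_op_vanishes_on_span:
  fixes A :: "'a::{idom,ring_char_0} poly \<Rightarrow> 'a poly"
  assumes "f \<in> shifted_power_span n" and "r \<le> n"
    and "homog_diff_op r D W A" and "W \<noteq> 0"
    and "\<And>g. degree g \<le> n \<Longrightarrow> degree (A g) \<le> n"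
    and "n < degree W + D * (n - r)"
  shows "A f = 0"
  using assms(1,3-)
proof (induction arbitrary: D W A)
  case zero
  show ?case
    using zero.prems(3)[of 0] zero.prems(4) by (intro homog_diff_op_at_0[OF zero.prems(1)]) simp
next
  case (add_power g s t)
  define h where "h = [:-t, 1:] ^ n"
  define P where "P = [:-t, 1:] ^ (n - r)"
  have "P dvd (pderiv ^^ j) h" if "j \<le> r" for j
    unfolding P_def h_def using that by (rule linear_power_dvd_higher_pderiv)
  then obtain X
    where X_op: "\<forall>b\<le>D. homog_diff_op r (D - b) (W * P ^ b) (X b)"
      and X_expand: "\<forall>g s. A (g + smult s h) = (\<Sum>b\<le>D. smult (s ^ b) (X b g))"
    using homog_diff_op_expand[OF add_power.prems(1)] by blast
  have "P \<noteq> 0" and "degree P = n - r" and "degree h = n"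
    by (simp_all add: P_def h_def degree_linear_power)
  have "X b g = 0" if "b \<le> D" for b
  proof (rule add_power.IH)
    show "homog_diff_op r (D - b) (W * P ^ b) (X b)"
      using X_op that by simp
    show "W * P ^ b \<noteq> 0"
      using add_power.prems(2) \<open>P \<noteq> 0\<close> by simp
    show "degree (X b g') \<le> n" if "degree g' \<le> n" for g'
    proof (rule degree_le_of_sum_powers[of "{..D}"])
      fix s
      have "degree (g' + smult s h) \<le> n"
        using that \<open>degree h = n\<close> by (meson degree_add_le degree_smult_le order_trans order_refl)
      then show "degree (\<Sum>b\<le>D. smult (s ^ b) (X b g')) \<le> n"
        using add_power.prems(3) X_expand by metis
    qed (use \<open>b \<le> D\<close> in auto)
    have "degree (W * P ^ b) = degree W + b * (n - r)"
      using add_power.prems(2) \<open>P \<noteq> 0\<close> \<open>degree P = n - r\<close>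
      by (simp add: degree_mult_eq degree_power_eq)
    then show "n < degree (W * P ^ b) + (D - b) * (n - r)"
      using add_power.prems(4) that by (metis add.assoc add_mult_distrib le_add_diff_inverse)
  qed
  then show ?case
    using X_expand by (simp add: h_def)
qed

lemma shifted_power_span_add:
  "f \<in> shifted_power_span n \<Longrightarrow> g \<in> shifted_power_span n \<Longrightarrow> g + f \<in> shifted_power_span n"
proof (induction rule: shifted_power_span.induct)
  case zero
  then show ?case by simp
next
  case (add_power f s t)
  then have "(g + f) + smult s ([:-t, 1:] ^ n) \<in> shifted_power_span n"
    by (intro shifted_power_span.add_power) simp
  then show ?case
    by (simp add: add.assoc)
qed

lemma shifted_power_span_smult:
  "f \<in> shifted_power_span n \<Longrightarrow> smult c f \<in> shifted_power_span n"
proof (induction rule: shifted_power_span.induct)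
  case zero
  then show ?case by (simp add: shifted_power_span.zero)
next
  case (add_power f s t)
  then have "smult c f + smult (c * s) ([:-t, 1:] ^ n) \<in> shifted_power_span n"
    by (intro shifted_power_span.add_power)
  then show ?case
    by (simp add: smult_add_right)
qed

lemma shifted_power_span_sum:
  "(\<And>i. i \<in> I \<Longrightarrow> F i \<in> shifted_power_span n) \<Longrightarrow> (\<Sum>i\<in>I. F i) \<in> shifted_power_span n"
  by (induction I rule: infinite_finite_induct)
    (auto intro: shifted_power_span.zero shifted_power_span_add)

lemma shifted_power_in_span: "smult s ([:a, 1:] ^ n) \<in> shifted_power_span n"
  using shifted_power_span.add_power[OF shifted_power_span.zero, of s "-a"] by simp

definition lagrange_poly :: "nat \<Rightarrow> nat \<Rightarrow> 'a::comm_ring_1 poly" where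
  "lagrange_poly n i = (\<Prod>k\<in>{..n} - {i}. [:-of_nat k, 1:])"

lemma poly_lagrange_poly_other:
  "j \<le> n \<Longrightarrow> j \<noteq> i \<Longrightarrow> poly (lagrange_poly n i) (of_nat j) = 0"
  unfolding lagrange_poly_def poly_prod by (rule prod_zero) auto

lemma poly_lagrange_poly_self:
  "poly (lagrange_poly n i) (of_nat i :: 'a::{idom,ring_char_0}) \<noteq> 0"
  unfolding lagrange_poly_def poly_prod by (subst prod_zero_iff) auto

lemma degree_lagrange_poly: "i \<le> n \<Longrightarrow> degree (lagrange_poly n i :: 'a::idom poly) \<le> n"
proof -
  assume "i \<le> n"
  have "degree (lagrange_poly n i :: 'a poly) \<le> (\<Sum>k\<in>{..n} - {i}. degree [:-of_nat k :: 'a, 1:])"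
    unfolding lagrange_poly_def using degree_prod_sum_le[of "{..n} - {i}" "\<lambda>k. [:-of_nat k :: 'a, 1:]"]
    by (simp add: o_def)
  also have "\<dots> = n"
    using \<open>i \<le> n\<close> by (simp add: card_Diff_singleton)
  finally show ?thesis .
qed

lemma monom_lagrange_interpolation:
  fixes m n :: nat
  assumes "m \<le> n"
  shows "monom (1 :: 'a::field_char_0) m =
    (\<Sum>i\<le>n. smult (of_nat i ^ m / poly (lagrange_poly n i) (of_nat i)) (lagrange_poly n i))"
    (is "_ = ?L")
proof (rule poly_eqI_degree[of "of_nat ` {..n}"])
  fix x :: 'a
  assume "x \<in> of_nat ` {..n}"
  then obtain j where j: "j \<le> n" "x = of_nat j" by auto
  have "poly ?L x = (\<Sum>i\<le>n. of_nat i ^ m / poly (lagrange_poly n i) (of_nat i) *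
      poly (lagrange_poly n i) (of_nat j))"
    using j by (simp add: poly_sum)
  also have "\<dots> = (\<Sum>i\<in>{j}. of_nat i ^ m / poly (lagrange_poly n i) (of_nat i) *
      poly (lagrange_poly n i) (of_nat j))"
    using j by (intro sum.mono_neutral_right) (auto simp: poly_lagrange_poly_other)
  also have "\<dots> = of_nat j ^ m"
    using poly_lagrange_poly_self[of n j, where 'a = 'a] by simp
  finally show "poly (monom 1 m) x = poly ?L x"
    using j by (simp add: poly_monom)
next
  have card: "card (of_nat ` {..n} :: 'a set) = Suc n"
    by (simp add: card_image inj_on_def)
  then show "degree (monom (1 :: 'a) m) < card (of_nat ` {..n} :: 'a set)"
    using assms by (simp add: degree_monom_eq)
  have "degree ?L \<le> n"
    by (intro degree_sum_le) (auto intro!: order_trans[OF degree_smult_le] degree_lagrange_poly)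
  then show "degree ?L < card (of_nat ` {..n} :: 'a set)"
    using card by simp
qed

(* Comparing coefficients of x^(n-k) in the interpolation formula gives weights alpha_i
   with sum_i i^m alpha_i = [m = n - k] for all m <= n; hence
   sum_i alpha_i (x + i)^n = (n choose k) x^k. *)
lemma monom_in_shifted_power_span:
  assumes "k \<le> n"
  shows "monom (1 :: 'a::field_char_0) k \<in> shifted_power_span n"
proof -
  define \<alpha> :: "nat \<Rightarrow> 'a"
    where "\<alpha> i = coeff (lagrange_poly n i) (n - k) / poly (lagrange_poly n i) (of_nat i)" for i
  have moments: "(\<Sum>i\<le>n. of_nat i ^ m * \<alpha> i) = (if m = n - k then 1 else 0)" if "m \<le> n" for m
  proof -
    have "coeff (monom (1 :: 'a) m) (n - k) = (\<Sum>i\<le>n. of_nat i ^ m * \<alpha> i)"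
      unfolding monom_lagrange_interpolation[OF that] \<alpha>_def by (simp add: coeff_sum)
    then show ?thesis
      by simp
  qed
  define F where "F = (\<Sum>i\<le>n. smult (\<alpha> i) ([:of_nat i, 1:] ^ n))"
  have "F = smult (of_nat (n choose k)) (monom 1 k)"
  proof (rule poly_eqI)
    fix l
    show "coeff F l = coeff (smult (of_nat (n choose k)) (monom 1 k)) l"
    proof (cases "l \<le> n")
      case True
      have "coeff F l = of_nat (n choose l) * (\<Sum>i\<le>n. of_nat i ^ (n - l) * \<alpha> i)"
        unfolding F_def using True
        by (simp add: coeff_sum coeff_linear_poly_power sum_distrib_left mult_ac)
      also have "\<dots> = coeff (smult (of_nat (n choose k)) (monom 1 k)) l"
        using True assms moments[of "n - l"] by auto
      finally show ?thesis .
    next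
      case False
      have "degree F \<le> n"
        unfolding F_def
        by (intro degree_sum_le) (auto intro: order_trans[OF degree_smult_le] simp: degree_linear_power)
      then show ?thesis
        using False assms by (simp add: coeff_eq_0)
    qed
  qed
  moreover have "F \<in> shifted_power_span n"
    unfolding F_def by (intro shifted_power_span_sum shifted_power_in_span)
  then have "smult (1 / of_nat (n choose k)) F \<in> shifted_power_span n"
    by (rule shifted_power_span_smult)
  ultimately show ?thesis
    using assms by simp
qed

lemma degree_le_imp_in_shifted_power_span:
  fixes p :: "'a::field_char_0 poly"
  assumes "degree p \<le> n"
  shows "p \<in> shifted_power_span n"
proof -
  have "p = (\<Sum>k\<le>n. smult (coeff p k) (monom 1 k))"
    using poly_as_sum_of_monoms'[OF assms] by (simp add: smult_monom)
  also have "\<dots> \<in> shifted_power_span n"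
    by (intro shifted_power_span_sum shifted_power_span_smult monom_in_shifted_power_span) simp
  finally show ?thesis .
qed

lemma exists_poly_with_higher_pderivs:
  fixes x0 :: "'a::field_char_0" and u :: "nat \<Rightarrow> 'a"
  shows "\<exists>f. degree f \<le> r \<and> (\<forall>j\<le>r. poly ((pderiv ^^ j) f) x0 = u j)"
proof -
  define f where "f = (\<Sum>i\<le>r. smult (u i / fact i) ([:-x0, 1:] ^ i))"
  have "degree f \<le> r"
    unfolding f_def
    by (intro degree_sum_le) (auto intro!: order_trans[OF degree_smult_le] simp: degree_linear_power)
  moreover have "poly ((pderiv ^^ j) f) x0 = u j" if "j \<le> r" for j
  proof -
    let ?t = "\<lambda>i. u i / fact i * ((\<Prod>l<j. of_nat (i - l)) * 0 ^ (i - j))"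
    have "poly ((pderiv ^^ j) f) x0 = (\<Sum>i\<le>r. ?t i)"
      unfolding f_def
      by (simp add: higher_pderiv_sum higher_pderiv_smult higher_pderiv_linear_power
          poly_sum mult.assoc)
    also have "\<dots> = ?t j"
    proof (rule sum.mono_neutral_right[of "{..r}" "{j}", simplified])
      show "j \<le> r" by (fact that)
      show "\<forall>i\<in>{..r} - {j}. ?t i = 0"
      proof
        fix i
        assume "i \<in> {..r} - {j}"
        then consider "i < j" | "j < i" by fastforce
        then show "?t i = 0"
        proof cases
          case 1
          then have "(\<Prod>l<j. of_nat (i - l) :: 'a) = 0"
            by (intro prod_zero) (auto intro!: bexI[of _ i])
          then show ?thesis by simp
        qed simp
      qed
    qed
    also have "\<dots> = u j"
      by (simp add: fact_prod_rev atLeast0LessThan)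
    finally show ?thesis .
  qed
  ultimately show ?thesis by blast
qed

lemma nat_digits_unique:
  fixes N :: nat
  assumes "\<forall>j\<le>m. a j < N" and "\<forall>j\<le>m. b j < N"
    and "(\<Sum>j\<le>m. a j * N ^ j) = (\<Sum>j\<le>m. b j * N ^ j)" and "j \<le> m"
  shows "a j = b j"
  using assms
proof (induction m arbitrary: a b j)
  case 0
  then show ?case by simp
next
  case (Suc m)
  have digit_split: "(\<Sum>j\<le>Suc m. c j * N ^ j) = c 0 + N * (\<Sum>j\<le>m. c (Suc j) * N ^ j)" for c
    by (subst sum.atMost_Suc_shift) (simp add: sum_distrib_left mult_ac)
  have "a 0 < N" and "b 0 < N"
    using Suc.prems(1,2) by auto
  moreover have "(a 0 + N * (\<Sum>j\<le>m. a (Suc j) * N ^ j)) mod N =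
      (b 0 + N * (\<Sum>j\<le>m. b (Suc j) * N ^ j)) mod N"
    using Suc.prems(3) by (simp only: digit_split)
  ultimately have "a 0 = b 0"
    by simp
  moreover have "a 0 + N * (\<Sum>j\<le>m. a (Suc j) * N ^ j) = b 0 + N * (\<Sum>j\<le>m. b (Suc j) * N ^ j)"
    using Suc.prems(3) by (simp only: digit_split)
  ultimately have "(\<Sum>j\<le>m. a (Suc j) * N ^ j) = (\<Sum>j\<le>m. b (Suc j) * N ^ j)"
    using \<open>a 0 < N\<close> by simp
  then have "a (Suc i) = b (Suc i)" if "i \<le> m" for i
    using Suc.IH[of "\<lambda>j. a (Suc j)" "\<lambda>j. b (Suc j)" i] Suc.prems(1,2) that by simp
  then show ?case
    using \<open>a 0 = b 0\<close> Suc.prems(4) by (cases j) simp_all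
qed

lemma kronecker_exponent_inj_on:
  fixes N r :: nat
  shows "inj_on (\<lambda>(k, a). k + N * (\<Sum>j\<le>r. a j * N ^ j))
    {(k, a). k < N \<and> (\<forall>j\<le>r. a j < N) \<and> (\<forall>j>r. a j = 0)}"
proof (rule inj_onI, clarsimp)
  fix k k' :: nat and a a' :: "nat \<Rightarrow> nat"
  assume bounds: "k < N" "\<forall>j\<le>r. a j < N" "k' < N" "\<forall>j\<le>r. a' j < N"
    and supp: "\<forall>j>r. a j = 0" "\<forall>j>r. a' j = 0"
    and eq: "k + N * (\<Sum>j\<le>r. a j * N ^ j) = k' + N * (\<Sum>j\<le>r. a' j * N ^ j)"
  define digits where "digits k a j = (case j of 0 \<Rightarrow> k | Suc i \<Rightarrow> a i)" for k :: nat and a j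
  have expand: "(\<Sum>j\<le>Suc r. digits k a j * N ^ j) = k + N * (\<Sum>j\<le>r. a j * N ^ j)" for k a
    unfolding digits_def by (subst sum.atMost_Suc_shift) (simp add: sum_distrib_left mult_ac)
  have "(\<Sum>j\<le>Suc r. digits k a j * N ^ j) = (\<Sum>j\<le>Suc r. digits k' a' j * N ^ j)"
    by (simp only: expand eq)
  then have same_digits: "digits k a j = digits k' a' j" if "j \<le> Suc r" for j
    using bounds that
    by (intro nat_digits_unique[of "Suc r" "digits k a" N "digits k' a'"])
      (auto simp: digits_def split: nat.split)
  have "k = k'"
    using same_digits[of 0] by (simp add: digits_def)
  moreover have "a j = a' j" for j
    using same_digits[of "Suc j"] supp by (cases "j \<le> r") (auto simp: digits_def)
  ultimately show "k = k' \<and> a = a'"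
    by auto
qed

(* Kronecker substitution x := y, u_j := y^(N^(j+1)), with N larger than every exponent,
   sends distinct monomials to distinct powers of y. *)
lemma peval_eq_0_imp_coeff_eq_0:
  assumes "poly_coeffs r c" and "\<And>x u. peval r c x u = 0"
  shows "c k a = 0"
proof (rule ccontr)
  let ?S = "{(k, a). c k a \<noteq> 0}"
  assume "c k a \<noteq> 0"
  have fin: "finite ?S" and supp: "\<And>k a j. c k a \<noteq> 0 \<Longrightarrow> r < j \<Longrightarrow> a j = 0"
    using assms(1) unfolding poly_coeffs_def by auto
  define N where "N = Suc (\<Sum>(k, a)\<in>?S. k + (\<Sum>j\<le>r. a j))"
  define e :: "nat \<times> (nat \<Rightarrow> nat) \<Rightarrow> nat" where "e = (\<lambda>(k, a). k + N * (\<Sum>j\<le>r. a j * N ^ j))"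
  have "k' < N \<and> (\<forall>j\<le>r. a' j < N)" if "(k', a') \<in> ?S" for k' a'
  proof -
    have "k' + (\<Sum>j\<le>r. a' j) < N"
      unfolding N_def using member_le_sum[OF that, of "\<lambda>(k, a). k + (\<Sum>j\<le>r. a j)"] fin by simp
    moreover have "a' j \<le> (\<Sum>j\<le>r. a' j)" if "j \<le> r" for j
      using member_le_sum[of j "{..r}" a'] that by simp
    ultimately show ?thesis by fastforce
  qed
  then have "inj_on e ?S"
    unfolding e_def using supp by (auto intro: inj_on_subset[OF kronecker_exponent_inj_on])
  define Q where "Q = (\<Sum>p\<in>?S. monom (c (fst p) (snd p)) (e p))"
  have monomial: "(\<Prod>j\<le>r. (y ^ (N * N ^ j)) ^ a j) = y ^ (N * (\<Sum>j\<le>r. a j * N ^ j))"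
    for y :: real and a
    by (simp add: power_sum sum_distrib_left power_mult[symmetric] mult_ac)
  have "poly Q y = peval r c y (\<lambda>j. y ^ (N * N ^ j))" for y
    unfolding Q_def peval_def poly_sum
    by (intro sum.cong) (auto simp: e_def poly_monom power_add monomial)
  then have "Q = 0"
    using assms(2) poly_all_0_iff_0 by metis
  moreover have "coeff Q (e (k, a)) = c k a"
  proof -
    have "coeff Q (e (k, a)) = (\<Sum>p\<in>?S. if p = (k, a) then c (fst p) (snd p) else 0)"
      unfolding Q_def coeff_sum coeff_monom
      using \<open>inj_on e ?S\<close> \<open>c k a \<noteq> 0\<close> by (intro sum.cong refl) (simp add: inj_on_eq_iff[OF \<open>inj_on e ?S\<close>])
    also have "\<dots> = c k a"
      using \<open>c k a \<noteq> 0\<close> fin by simp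
    finally show ?thesis .
  qed
  ultimately show False
    using \<open>c k a \<noteq> 0\<close> by simp
qed

definition op_poly :: "nat \<Rightarrow> (nat \<Rightarrow> (nat \<Rightarrow> nat) \<Rightarrow> real) \<Rightarrow> real poly \<Rightarrow> real poly" where
  "op_poly r c f = (\<Sum>(k, a)\<in>{(k, a). c k a \<noteq> 0}.
    smult (c k a) (monom 1 k * (\<Prod>j\<le>r. ((pderiv ^^ j) f) ^ a j)))"

definition homog_part ::
    "nat \<Rightarrow> (nat \<Rightarrow> (nat \<Rightarrow> nat) \<Rightarrow> real) \<Rightarrow> nat \<Rightarrow> nat \<Rightarrow> (nat \<Rightarrow> nat) \<Rightarrow> real" where
  "homog_part r c d k a = (if (\<Sum>j\<le>r. a j) = d then c k a else 0)"

lemma poly_op_poly: "poly (op_poly r c f) x = op_apply r c f x"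
  unfolding op_poly_def op_apply_def peval_def poly_sum
  by (intro sum.cong) (auto simp: poly_prod poly_monom)

lemma degree_op_poly_le:
  assumes "preserves_Pn r c n" and "degree f \<le> n"
  shows "degree (op_poly r c f) \<le> n"
proof -
  obtain g where "degree g \<le> n" and "\<forall>x. op_apply r c f x = poly g x"
    using assms unfolding preserves_Pn_def by blast
  moreover from this have "op_poly r c f = g"
    by (intro poly_ext) (simp add: poly_op_poly)
  ultimately show ?thesis by simp
qed

lemma poly_coeffs_homog_part: "poly_coeffs r c \<Longrightarrow> poly_coeffs r (homog_part r c d)"
  unfolding poly_coeffs_def homog_part_def
  by (auto elim: rev_finite_subset)

lemma homog_diff_op_op_poly_homog_part:
  assumes "finite {(k, a). c k a \<noteq> 0}"
  shows "homog_diff_op r d 1 (op_poly r (homog_part r c d))"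
proof -
  have "homog_diff_op r d 1
      (\<lambda>f. smult (c k a) (monom 1 k) * (\<Prod>j\<le>r. ((pderiv ^^ j) f) ^ a j))"
    if "(\<Sum>j\<le>r. a j) = d" for k a
    using homog_diff_op_prod[OF homog_diff_op.const[of r 1 "smult (c k a) (monom 1 k)"], of r a]
      that by simp
  then have "homog_diff_op r d 1 (\<lambda>f. \<Sum>(k, a)\<in>{(k, a). homog_part r c d k a \<noteq> 0}.
      smult (homog_part r c d k a) (monom 1 k * (\<Prod>j\<le>r. ((pderiv ^^ j) f) ^ a j)))"
    using assms
    by (intro homog_diff_op_sum) (auto simp: homog_part_def elim: rev_finite_subset)
  then show ?thesis
    unfolding op_poly_def .
qed

lemma op_poly_eq_sum_homog_parts:
  assumes "finite {(k, a). c k a \<noteq> 0}"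
  shows "op_poly r c f =
    (\<Sum>d\<in>(\<lambda>(k, a). \<Sum>j\<le>r. a j) ` {(k, a). c k a \<noteq> 0}. op_poly r (homog_part r c d) f)"
proof -
  let ?S = "{(k, a). c k a \<noteq> 0}"
  let ?deg = "\<lambda>(k, a). \<Sum>j\<le>r. a j :: nat"
  let ?t = "\<lambda>(k, a). smult (c k a) (monom 1 k * (\<Prod>j\<le>r. ((pderiv ^^ j) f) ^ a j))"
  have "op_poly r c f = (\<Sum>d\<in>?deg ` ?S. \<Sum>p\<in>{p\<in>?S. ?deg p = d}. ?t p)"
    unfolding op_poly_def by (rule sum.group[symmetric]) (use assms in auto)
  also have "\<dots> = (\<Sum>d\<in>?deg ` ?S. op_poly r (homog_part r c d) f)"
    unfolding op_poly_def homog_part_def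
    by (intro sum.cong refl arg_cong2[where f = sum]) (auto simp: fun_eq_iff)
  finally show ?thesis .
qed

lemma degree_op_poly_homog_part_le:
  assumes "poly_coeffs r c" and "preserves_Pn r c n" and "degree f \<le> n"
  shows "degree (op_poly r (homog_part r c d) f) \<le> n"
proof -
  let ?S = "{(k, a). c k a \<noteq> 0}"
  let ?D = "(\<lambda>(k, a). \<Sum>j\<le>r. a j) ` ?S"
  have fin: "finite ?S"
    using assms(1) unfolding poly_coeffs_def by blast
  show ?thesis
  proof (cases "d \<in> ?D")
    case True
    show ?thesis
    proof (rule degree_le_of_sum_powers[where X = "\<lambda>d. op_poly r (homog_part r c d) f"])
      fix s
      have "op_poly r c (smult s f) = (\<Sum>d\<in>?D. smult (s ^ d) (op_poly r (homog_part r c d) f))"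
        unfolding op_poly_eq_sum_homog_parts[OF fin]
        by (simp add: homog_diff_op_smult[OF homog_diff_op_op_poly_homog_part[OF fin]])
      moreover have "degree (op_poly r c (smult s f)) \<le> n"
        using assms(2,3) by (simp add: degree_op_poly_le)
      ultimately show "degree (\<Sum>d\<in>?D. smult (s ^ d) (op_poly r (homog_part r c d) f)) \<le> n"
        by simp
    qed (use fin True in auto)
  next
    case False
    then have "homog_part r c d k a = 0" for k a
      by (auto simp: homog_part_def)
    then show ?thesis
      by (simp add: op_poly_def)
  qed
qed

lemma op_poly_vanishing_imp_coeff_eq_0:
  assumes "poly_coeffs r c" and "\<And>f. degree f \<le> r \<Longrightarrow> op_poly r c f = 0"
  shows "c k a = 0"
proof (rule peval_eq_0_imp_coeff_eq_0[OF assms(1)])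
  fix x :: real and u :: "nat \<Rightarrow> real"
  obtain f where "degree f \<le> r" and jet: "\<forall>j\<le>r. poly ((pderiv ^^ j) f) x = u j"
    using exists_poly_with_higher_pderivs by blast
  have "peval r c x u = op_apply r c f x"
    unfolding op_apply_def peval_def using jet by (intro sum.cong refl prod.cong) auto
  also have "\<dots> = 0"
    using assms(2)[OF \<open>degree f \<le> r\<close>] by (simp flip: poly_op_poly)
  finally show "peval r c x u = 0" .
qed

lemma preserves_Pn_udegree_bound:
  assumes "r \<le> n" and "poly_coeffs r c" and "preserves_Pn r c n" and "c k a \<noteq> 0"
  shows "(\<Sum>j\<le>r. a j) * (n - r) \<le> n"
proof (rule ccontr)
  define d where "d = (\<Sum>j\<le>r. a j)"
  assume "\<not> d * (n - r) \<le> n"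
  have fin: "finite {(k, a). c k a \<noteq> 0}"
    using assms(2) unfolding poly_coeffs_def by blast
  have vanishes: "op_poly r (homog_part r c d) f = 0" if "degree f \<le> n" for f
  proof (rule homog_diff_op_vanishes_on_span[where D = d and W = 1 and A = "op_poly r (homog_part r c d)"])
    show "f \<in> shifted_power_span n"
      using that by (rule degree_le_imp_in_shifted_power_span)
    show "homog_diff_op r d 1 (op_poly r (homog_part r c d))"
      using fin by (rule homog_diff_op_op_poly_homog_part)
    show "degree (op_poly r (homog_part r c d) g) \<le> n" if "degree g \<le> n" for g
      using assms(2,3) that by (rule degree_op_poly_homog_part_le)
    show "n < degree (1 :: real poly) + d * (n - r)"
      using \<open>\<not> d * (n - r) \<le> n\<close> by simp
  qed (use assms(1) in simp_all)
  have "homog_part r c d k a = 0"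
  proof (rule op_poly_vanishing_imp_coeff_eq_0[OF poly_coeffs_homog_part[OF assms(2), of d]])
    show "op_poly r (homog_part r c d) f = 0" if "degree f \<le> r" for f
      using vanishes that assms(1) by simp
  qed
  with assms(4) show False
    by (simp add: homog_part_def d_def)
qed

lemma udeg_le_of_udegree_bound:
  assumes "\<And>k a. c k a \<noteq> 0 \<Longrightarrow> (\<Sum>j\<le>r. a j) * (n - r) \<le> n" and "n < Suc d * (n - r)"
  shows "udeg_le r c d"
  unfolding udeg_le_def
proof (intro allI impI)
  fix k a
  assume "c k a \<noteq> 0"
  show "(\<Sum>j\<le>r. a j) \<le> d"
  proof (rule ccontr)
    assume "\<not> (\<Sum>j\<le>r. a j) \<le> d"
    then have "Suc d * (n - r) \<le> (\<Sum>j\<le>r. a j) * (n - r)"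
      by (intro mult_le_mono1) simp
    with assms(1)[OF \<open>c k a \<noteq> 0\<close>] assms(2) show False
      by simp
  qed
qed

theorem mainTheorem4:
  fixes r n :: nat and c :: "nat \<Rightarrow> (nat \<Rightarrow> nat) \<Rightarrow> real"
  assumes "r \<le> n"
    and "poly_coeffs r c"
    and "preserves_Pn r c n"
  shows "(real r < real n / 2 \<longrightarrow> udeg_le r c 1)
       \<and> (real r < 2 * real n / 3 \<longrightarrow> udeg_le r c 2)"
proof -
  have gap: "(\<Sum>j\<le>r. a j) * (n - r) \<le> n" if "c k a \<noteq> 0" for k a
    using that by (rule preserves_Pn_udegree_bound[OF assms])
  have "udeg_le r c 1" if "real r < real n / 2"
  proof (rule udeg_le_of_udegree_bound)
    show "(\<Sum>j\<le>r. a j) * (n - r) \<le> n" if "c k a \<noteq> 0" for k a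
      using that by (rule gap)
    have "2 * r < n"
      using \<open>real r < real n / 2\<close> by linarith
    then show "n < Suc 1 * (n - r)"
      by simp
  qed
  moreover have "udeg_le r c 2" if "real r < 2 * real n / 3"
  proof (rule udeg_le_of_udegree_bound)
    show "(\<Sum>j\<le>r. a j) * (n - r) \<le> n" if "c k a \<noteq> 0" for k a
      using that by (rule gap)
    have "3 * r < 2 * n"
      using \<open>real r < 2 * real n / 3\<close> by linarith
    then show "n < Suc 2 * (n - r)"
      by simp
  qed
  ultimately show ?thesis
    by blast
qed

end
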